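(* Let $y_2>0$ and equip $V^{5,2}$ with the Sasakian structure $\eta=X^1$, $\xi=X_1$, $g=4y_2^2Q|_{\mathfrak m_1}+y_2Q|_{\mathfrak m_2\oplus\mathfrak m_3}$, and with a $\mathrm{G}_2$-structure $\varphi$ with parameters $x=a$, $y=b$, $z^2=4(a^2+b^2)^{4/3}$ inducing this metric. Let $A$ be a connection on a principal (or vector) bundle over $V^{5,2}$ with curvature $F_A$. If $A$ is a self-dual contact instanton, i.e. $\ast(\eta\wedge\omega\wedge F_A)=F_A$ with $\omega=\frac12 d\eta$, then $A$ is a $\mathrm{G}_2$-instanton, i.e. $\ast(\varphi\wedge F_A)=-F_A$.
   Context: Basis of $\mathfrak{so}(5)$ (with $E_{ij}$ the elementary $5\times5$ matrices): $e_1=E_{12}-E_{21}$, $e_2=E_{13}-E_{31}$, $e_3=E_{14}-E_{41}$, $e_4=E_{15}-E_{51}$, $e_5=E_{23}-E_{32}$, $e_6=E_{24}-E_{42}$, $e_7=E_{25}-E_{52}$, $e_8=E_{34}-E_{43}$, $e_9=E_{35}-E_{53}$, $e_{10}=E_{54}-E_{45}$. $V^{5,2}=\mathrm{SO}(5)/\mathrm{SO}(3)$, $\mathrm{Lie}(\mathrm{SO}(3))=\mathrm{span}\{e_8,e_9,e_{10}\}$, $\mathfrak m=\mathrm{span}\{e_1,\dots,e_7\}$ identified with the tangent space at the origin; invariant tensors = $\mathrm{Ad}(\mathrm{SO}(3))$-invariant tensors on $\mathfrak m$. $Q(A,B)=\frac12\mathrm{tr}(AB^T)$, $\mathfrak m_1=\mathrm{span}\{e_1\}$,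 $\mathfrak m_2=\mathrm{span}\{e_2,e_3,e_4\}$, $\mathfrak m_3=\mathrm{span}\{e_5,e_6,e_7\}$. With $y_1=4y_2^2$, $y_3=y_2$: orthonormal basis $X_1=e_1/\sqrt{y_1}$, $X_i=e_i/\sqrt{y_2}$ ($i=2,\dots,7$), dual coframe $X^i$; then $\omega=\frac12 d\eta=X^{25}+X^{36}+X^{47}$. The $\mathrm{G}_2$-structure with parameters $(a,b,x,y,z)$ is the invariant 3-form $-z\,e^1\wedge(e^{25}+e^{36}+e^{47})+x\,e^{234}+a(-e^{267}+e^{357}-e^{456})+b(e^{237}-e^{246}+e^{345})-y\,e^{567}$ (with $e^i$ the dual basis of $\mathfrak m^*$), which for $x=a$, $y=b$, $z^2=4(a^2+b^2)^{4/3}$ induces the metric $g$ above. $\ast$ denotes the Hodge star of $g$ with the orientation induced by $\varphi$; curvature is a Lie-algebra-valued (adjoint bundle valued) 2-form and $\ast$, $\wedge$ act on its form part.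
   Formalization: The parameter z is the positive root of $z^2=4(a^2+b^2)^{4/3}$, that is z > 0, with the orientation induced by $\varphi$ fixed by Bryant's convention. The paper assumes this as well. *)

theory Defs
  imports "HOL-Analysis.Analysis"
begin

text \<open>Exterior algebra of the 7-dimensional space m, in coordinates w.r.t. the
  g-orthonormal frame X_1,...,X_7 (indices 1..7).  A form with values in a real
  vector space 'v is a coefficient function on index sets: the coefficient of
  X^I (I written in increasing order) is  F I.  Coefficients on sets not contained
  in {1..7} are irrelevant (and are 0 for all forms built below).\<close>

definition idx :: "nat set" where "idx = {1..7}"

definition shuffle_sign :: "nat set \<Rightarrow> nat set \<Rightarrow> real" where
  "shuffle_sign I J = (-1) ^ card {(i, j). i \<in> I \<and> j \<in> J \<and> j < i}"

definition wedge :: "(nat set \<Rightarrow> real) \<Rightarrow> (nat set \<Rightarrow> 'v::real_vector) \<Rightarrow> nat set \<Rightarrow> 'v" where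
  "wedge \<alpha> F K = (if K \<subseteq> idx then
      (\<Sum>I\<in>Pow K. (shuffle_sign I (K - I) * \<alpha> I) *\<^sub>R F (K - I)) else 0)"

definition interior :: "nat \<Rightarrow> (nat set \<Rightarrow> 'v::real_vector) \<Rightarrow> nat set \<Rightarrow> 'v" where
  "interior u F K = (if u \<in> idx \<and> K \<subseteq> idx \<and> u \<notin> K
      then shuffle_sign {u} K *\<^sub>R F (insert u K) else 0)"

text \<open>Hodge star of the metric for which X_1..X_7 is orthonormal, with orientation
  s * X^{1..7} (s = 1 or -1):  X^I wedge *X^I = s X^{1..7}.\<close>
definition hodge :: "real \<Rightarrow> (nat set \<Rightarrow> 'v::real_vector) \<Rightarrow> nat set \<Rightarrow> 'v" where
  "hodge s F K = (if K \<subseteq> idx then (s * shuffle_sign (idx - K) K) *\<^sub>R F (idx - K) else 0)"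

definition basic_form :: "nat set \<Rightarrow> nat set \<Rightarrow> real" where
  "basic_form I K = (if K = I then 1 else 0)"

text \<open>The invariant 3-form with parameters (a,b,x,y,z), in the basis e^I of m*.\<close>
definition phi_e :: "real \<Rightarrow> real \<Rightarrow> real \<Rightarrow> real \<Rightarrow> real \<Rightarrow> nat set \<Rightarrow> real" where
  "phi_e a b x y z K =
     - z * (basic_form {1,2,5} K + basic_form {1,3,6} K + basic_form {1,4,7} K)
     + x * basic_form {2,3,4} K
     + a * (- basic_form {2,6,7} K + basic_form {3,5,7} K - basic_form {4,5,6} K)
     + b * (basic_form {2,3,7} K - basic_form {2,4,6} K + basic_form {3,4,5} K)
     - y * basic_form {5,6,7} K"

text \<open>X_i = e_i / sqrt(y_i), with y_1 = 4 y_2^2 and y_i = y_2 (i = 2..7);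
  hence e^i = X^i / sqrt(y_i).\<close>
definition frame_scale :: "real \<Rightarrow> nat \<Rightarrow> real" where
  "frame_scale y2 i = (if i = 1 then sqrt (4 * y2^2) else sqrt y2)"

definition phi_X :: "real \<Rightarrow> real \<Rightarrow> real \<Rightarrow> real \<Rightarrow> real \<Rightarrow> real \<Rightarrow> nat set \<Rightarrow> real" where
  "phi_X y2 a b x y z K = phi_e a b x y z K / (\<Prod>i\<in>K. frame_scale y2 i)"

text \<open>Contact form eta = X^1 and omega = (1/2) d eta = X^25 + X^36 + X^47.\<close>
definition eta :: "nat set \<Rightarrow> real" where "eta = basic_form {1}"
definition omega :: "nat set \<Rightarrow> real" where
  "omega K = basic_form {2,5} K + basic_form {3,6} K + basic_form {4,7} K"

definition B_phi :: "(nat set \<Rightarrow> real) \<Rightarrow> nat \<Rightarrow> nat \<Rightarrow> real" where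
  "B_phi \<phi> u v = wedge (wedge (interior u \<phi>) (interior v \<phi>)) \<phi> idx"

text \<open>Orientation induced by phi: sign s such that B(v,v) is a positive multiple of
  s X^{1..7} (Bryant's convention B(u,v) = 6 g_phi(u,v) vol_phi).\<close>
definition phi_orientation :: "(nat set \<Rightarrow> real) \<Rightarrow> real" where
  "phi_orientation \<phi> = sgn (B_phi \<phi> 1 1)"

definition induces_metric_g :: "(nat set \<Rightarrow> real) \<Rightarrow> bool" where
  "induces_metric_g \<phi> \<longleftrightarrow> phi_orientation \<phi> \<noteq> 0 \<and>
     (\<forall>u\<in>idx. \<forall>v\<in>idx. B_phi \<phi> u v = 6 * (if u = v then 1 else 0) * phi_orientation \<phi>)"

definition is_two_form :: "(nat set \<Rightarrow> 'v::real_vector) \<Rightarrow> bool" where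
  "is_two_form F \<longleftrightarrow> (\<forall>K. (K \<subseteq> idx \<and> card K = 2) \<or> F K = 0)"

end

theory Submission
  imports Defs
begin

text \<open>In the orthonormal frame the 3-form is \<phi> = c \<eta>\<and>\<omega> + p Re \<Omega> + q Im \<Omega>, where \<Omega> is the
  transverse complex volume form. Since B(\<xi>,\<xi>) = -6 c^3 X^{1..7}, inducing the metric forces
  c = -1 and the orientation X^{1..7}. A self-dual contact instanton is horizontal, of type (1,1)
  and primitive, so F \<and> \<Omega> = 0 and \<star>(\<phi> \<and> F) = -\<star>(\<eta> \<and> \<omega> \<and> F) = -F.\<close>

definition card_below :: "nat \<Rightarrow> nat set \<Rightarrow> nat" where
  "card_below i J = card {j\<in>J. j < i}"

lemma shuffle_sign_eq_card_below:
  assumes "finite I" "finite J"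
  shows "shuffle_sign I J = (-1) ^ (\<Sum>i\<in>I. card_below i J)"
proof -
  have "{(i, j). i \<in> I \<and> j \<in> J \<and> j < i} = Sigma I (\<lambda>i. {j\<in>J. j < i})" by auto
  then show ?thesis
    unfolding shuffle_sign_def card_below_def using assms by (simp add: card_SigmaI)
qed

lemma card_below_empty: "card_below i {} = 0"
  by (simp add: card_below_def)

lemma card_below_insert:
  assumes "finite J"
  shows "card_below i (insert j J) =
    (if j \<in> J then card_below i J else if j < i then Suc (card_below i J) else card_below i J)"
proof -
  have "{k \<in> insert j J. k < i} = (if j < i then insert j {k\<in>J. k < i} else {k\<in>J. k < i})"
    by auto
  then show ?thesis unfolding card_below_def using assms by (auto simp: insert_absorb)
qed

lemma insert_eq_iff_subsets: "insert a A = B \<longleftrightarrow> a \<in> B \<and> A \<subseteq> B \<and> B \<subseteq> insert a A"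
  by auto

lemma idx_eq: "idx = {1,2,3,4,5,6,7}"
  unfolding idx_def by auto

lemmas literal_index_simps = shuffle_sign_eq_card_below card_below_empty card_below_insert
  insert_Diff_if insert_eq_iff_subsets idx_eq

lemma finite_subset_idx: "K \<subseteq> idx \<Longrightarrow> finite K"
  unfolding idx_def using finite_subset by blast

lemma shuffle_sign_1_left:
  assumes "K \<subseteq> idx"
  shows "shuffle_sign {1} K = 1"
proof -
  have "{(i, j). i \<in> {1} \<and> j \<in> K \<and> j < i} = {}" using assms by (auto simp: idx_def)
  then show ?thesis unfolding shuffle_sign_def by (simp only: card.empty power_0)
qed

lemma idx_pair_cases:
  assumes "K \<subseteq> idx" "card K = 2"
  obtains x y where "K = {x, y}" "x \<in> idx" "y \<in> idx" "x < y"
proof -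
  obtain u v where uv: "K = {u, v}" "u \<noteq> v" using assms(2) by (auto simp: card_2_iff)
  then consider "u < v" | "v < u" by linarith
  then show ?thesis
    by cases (use that uv assms(1) in \<open>auto simp: insert_commute\<close>)
qed

lemma wedge_basic_form_left:
  "wedge (basic_form T) F K =
    (if K \<subseteq> idx \<and> T \<subseteq> K then shuffle_sign T (K - T) *\<^sub>R F (K - T) else 0)"
proof (cases "K \<subseteq> idx")
  case True
  have "(\<Sum>I\<in>Pow K. (shuffle_sign I (K - I) * basic_form T I) *\<^sub>R F (K - I))
      = (\<Sum>I\<in>Pow K. if T = I then shuffle_sign T (K - T) *\<^sub>R F (K - T) else 0)"
    by (rule sum.cong) (auto simp: basic_form_def)
  also have "\<dots> = (if T \<subseteq> K then shuffle_sign T (K - T) *\<^sub>R F (K - T) else 0)"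
    using finite_subset_idx[OF True] by (simp add: sum.delta')
  finally show ?thesis using True by (simp add: wedge_def)
qed (simp add: wedge_def)

lemma wedge_basic_form_right:
  "wedge \<alpha> (basic_form T) K =
    (if K \<subseteq> idx \<and> T \<subseteq> K then shuffle_sign (K - T) T * \<alpha> (K - T) else 0)"
proof (cases "K \<subseteq> idx")
  case True
  have "(\<Sum>I\<in>Pow K. (shuffle_sign I (K - I) * \<alpha> I) *\<^sub>R basic_form T (K - I))
      = (\<Sum>I\<in>Pow K. if K - T = I \<and> T \<subseteq> K then shuffle_sign (K - T) T * \<alpha> (K - T) else 0)"
    by (rule sum.cong) (auto simp: basic_form_def double_diff)
  also have "\<dots> = (if T \<subseteq> K then shuffle_sign (K - T) T * \<alpha> (K - T) else 0)"
    using finite_subset_idx[OF True] by (cases "T \<subseteq> K") (auto simp: sum.delta)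
  finally show ?thesis using True by (simp add: wedge_def)
qed (simp add: wedge_def)

lemma wedge_add_left: "wedge (\<lambda>K. \<alpha> K + \<beta> K) F = (\<lambda>K. wedge \<alpha> F K + wedge \<beta> F K)"
  by (simp add: wedge_def fun_eq_iff sum.distrib scaleR_add_left algebra_simps)

lemma wedge_diff_left: "wedge (\<lambda>K. \<alpha> K - \<beta> K) F = (\<lambda>K. wedge \<alpha> F K - wedge \<beta> F K)"
  by (simp add: wedge_def fun_eq_iff sum_subtractf scaleR_diff_left algebra_simps)

lemma wedge_scale_left: "wedge (\<lambda>K. r * \<alpha> K) F = (\<lambda>K. r *\<^sub>R wedge \<alpha> F K)"
  by (simp add: wedge_def fun_eq_iff scaleR_sum_right mult.left_commute)

lemma wedge_add_right: "wedge \<alpha> (\<lambda>K. F K + G K) = (\<lambda>K. wedge \<alpha> F K + wedge \<alpha> G K)"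
  by (simp add: wedge_def fun_eq_iff sum.distrib algebra_simps)

lemma wedge_diff_right: "wedge \<alpha> (\<lambda>K. F K - G K) = (\<lambda>K. wedge \<alpha> F K - wedge \<alpha> G K)"
  by (simp add: wedge_def fun_eq_iff sum_subtractf algebra_simps)

lemma wedge_mult_right:
  fixes \<beta> :: "nat set \<Rightarrow> real"
  shows "wedge \<alpha> (\<lambda>K. r * \<beta> K) = (\<lambda>K. r * wedge \<alpha> \<beta> K)"
  by (simp add: wedge_def fun_eq_iff sum_distrib_left mult_ac)

lemma omega_eq: "omega = (\<lambda>K. basic_form {2,5} K + basic_form {3,6} K + basic_form {4,7} K)"
  by (rule ext) (simp add: omega_def)

lemma wedge_eta_omega_eq:
  "wedge eta omega = (\<lambda>K. basic_form {1,2,5} K + basic_form {1,3,6} K + basic_form {1,4,7} K)"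
proof
  fix K
  show "wedge eta omega K = basic_form {1,2,5} K + basic_form {1,3,6} K + basic_form {1,4,7} K"
  proof (cases "K \<subseteq> idx \<and> 1 \<in> K")
    case True
    have "basic_form A (K - {1}) = basic_form (insert 1 A) K" if "1 \<notin> A" for A
      using True that by (auto simp: basic_form_def)
    moreover have "K - {1} \<subseteq> idx" using True by auto
    ultimately show ?thesis
      using True by (simp add: eta_def wedge_basic_form_left shuffle_sign_1_left omega_def
          del: One_nat_def)
  next
    case False
    then have "K \<noteq> {1,2,5} \<and> K \<noteq> {1,3,6} \<and> K \<noteq> {1,4,7}" by (auto simp: idx_def)
    moreover have "wedge eta omega K = 0"
      using False by (auto simp: eta_def wedge_basic_form_left)
    ultimately show ?thesis by (simp add: basic_form_def)
  qed
qed

text \<open>Real and imaginary part of \<Omega> = (X^2 + i X^5) \<and> (X^3 + i X^6) \<and> (X^4 + i X^7), the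
  transverse complex volume form of the complex structure whose fundamental form is \<omega>.\<close>
definition re_Omega :: "nat set \<Rightarrow> real" where
  "re_Omega = (\<lambda>K. basic_form {2,3,4} K - basic_form {2,6,7} K + basic_form {3,5,7} K
     - basic_form {4,5,6} K)"

definition im_Omega :: "nat set \<Rightarrow> real" where
  "im_Omega = (\<lambda>K. basic_form {2,3,7} K - basic_form {2,4,6} K + basic_form {3,4,5} K
     - basic_form {5,6,7} K)"

definition sasaki_g2_form :: "real \<Rightarrow> real \<Rightarrow> real \<Rightarrow> nat set \<Rightarrow> real" where
  "sasaki_g2_form c p q = (\<lambda>K. c * wedge eta omega K + p * re_Omega K + q * im_Omega K)"

lemma prod_frame_scale_contact:
  assumes "y2 > 0" "i \<noteq> 1" "j \<noteq> 1" "i \<noteq> j"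
  shows "(\<Prod>k\<in>{1, i, j}. frame_scale y2 k) = 2 * y2^2"
proof -
  have "sqrt (4 * y2^2) = 2 * y2" using assms by (simp add: real_sqrt_mult)
  moreover have "sqrt y2 * sqrt y2 = y2" using assms by simp
  ultimately show ?thesis using assms by (simp add: frame_scale_def power2_eq_square)
qed

lemma prod_frame_scale_transverse:
  assumes "i \<noteq> 1" "j \<noteq> 1" "k \<noteq> 1" "i \<noteq> j" "i \<noteq> k" "j \<noteq> k"
  shows "(\<Prod>l\<in>{i, j, k}. frame_scale y2 l) = sqrt y2 ^ 3"
  using assms by (simp add: frame_scale_def power3_eq_cube)

lemma phi_X_eq_sasaki_g2_form:
  assumes "y2 > 0"
  shows "phi_X y2 a b a b z = sasaki_g2_form (- z / (2 * y2^2)) (a / sqrt y2 ^ 3) (b / sqrt y2 ^ 3)"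
proof
  fix K
  show "phi_X y2 a b a b z K =
      sasaki_g2_form (- z / (2 * y2^2)) (a / sqrt y2 ^ 3) (b / sqrt y2 ^ 3) K"
  proof (cases "K \<in> {{1,2,5}, {1,3,6}, {1,4,7}, {2,3,4}, {2,6,7}, {3,5,7}, {4,5,6}, {2,3,7},
      {2,4,6}, {3,4,5}, {5,6,7}}")
    case True
    then consider "K = {1,2,5}" | "K = {1,3,6}" | "K = {1,4,7}" | "K = {2,3,4}" | "K = {2,6,7}"
      | "K = {3,5,7}" | "K = {4,5,6}" | "K = {2,3,7}" | "K = {2,4,6}" | "K = {3,4,5}"
      | "K = {5,6,7}"
      unfolding insert_iff empty_iff by argo
    then show ?thesis
      unfolding phi_X_def phi_e_def sasaki_g2_form_def wedge_eta_omega_eq re_Omega_def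
        im_Omega_def basic_form_def
      by cases (simp_all only: prod_frame_scale_contact[OF assms] prod_frame_scale_transverse,
          simp_all add: insert_eq_iff_subsets)
  next
    case False
    then show ?thesis
      by (simp add: phi_X_def phi_e_def sasaki_g2_form_def wedge_eta_omega_eq re_Omega_def
          im_Omega_def basic_form_def)
  qed
qed

lemma interior_xi_sasaki_g2_form: "interior 1 (sasaki_g2_form c p q) = (\<lambda>K. c * omega K)"
proof
  fix K
  show "interior 1 (sasaki_g2_form c p q) K = c * omega K"
  proof (cases "1 \<notin> K \<and> K \<subseteq> idx")
    case True
    have "basic_form (insert 1 A) (insert 1 K) = basic_form A K" if "1 \<notin> A" for A
      using True that by (auto simp: basic_form_def insert_ident)
    moreover have "basic_form A (insert 1 K) = 0" if "1 \<notin> A" for A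
      using that by (auto simp: basic_form_def)
    moreover have "(1::nat) \<in> idx" by (simp add: idx_def)
    ultimately show ?thesis
      using True by (simp add: interior_def sasaki_g2_form_def wedge_eta_omega_eq
          re_Omega_def im_Omega_def omega_def shuffle_sign_1_left del: One_nat_def)
  next
    case False
    then have "K \<noteq> {2,5} \<and> K \<noteq> {3,6} \<and> K \<noteq> {4,7}" by (auto simp: idx_def)
    then have "omega K = 0" by (simp add: omega_def basic_form_def)
    then show ?thesis using False by (auto simp: interior_def)
  qed
qed

lemma B_phi_xi_sasaki_g2_form: "B_phi (sasaki_g2_form c p q) 1 1 = - 6 * c^3"
proof -
  have "B_phi (sasaki_g2_form c p q) 1 1 =
      c^2 * wedge (wedge omega omega) (sasaki_g2_form c p q) idx"
    unfolding B_phi_def interior_xi_sasaki_g2_form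
    by (simp add: wedge_scale_left wedge_mult_right power2_eq_square)
  also have "wedge (wedge omega omega) (sasaki_g2_form c p q) idx = - 6 * c"
    unfolding sasaki_g2_form_def wedge_eta_omega_eq re_Omega_def im_Omega_def
    by (simp only: wedge_add_right wedge_diff_right wedge_mult_right wedge_basic_form_right)
      (simp add: literal_index_simps omega_eq wedge_add_left wedge_basic_form_left
        del: One_nat_def, simp add: literal_index_simps basic_form_def del: One_nat_def)
  finally show ?thesis by (simp add: power3_eq_cube power2_eq_square)
qed

lemma induces_metric_g_sasaki_g2_form:
  assumes "c < 0" and "induces_metric_g (sasaki_g2_form c p q)"
  shows "phi_orientation (sasaki_g2_form c p q) = 1" and "c = -1"
proof -
  have "c^3 < 0" using assms(1) by (simp add: power_less_zero_eq)
  then show orientation: "phi_orientation (sasaki_g2_form c p q) = 1"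
    unfolding phi_orientation_def B_phi_xi_sasaki_g2_form by simp
  have "(1::nat) \<in> idx" by (simp add: idx_def)
  then have "B_phi (sasaki_g2_form c p q) 1 1 = 6"
    using assms(2) orientation by (simp add: induces_metric_g_def)
  then have "(c + 1) * (c^2 - c + 1) = 0"
    unfolding B_phi_xi_sasaki_g2_form by (simp add: algebra_simps power2_eq_square power3_eq_cube)
  moreover have "c^2 - c + 1 > 0" using assms(1) zero_le_power2[of c] by linarith
  ultimately show "c = -1" by simp
qed

text \<open>These equations say that F is horizontal, invariant under the transverse complex structure
  (type (1,1)) and primitive with respect to \<omega>.\<close>
lemma self_dual_contact_instanton_coeffs:
  assumes "hodge 1 (wedge (wedge eta omega) F) = F"
  shows "F {1,2} = 0" "F {1,3} = 0" "F {1,4} = 0" "F {1,5} = 0" "F {1,6} = 0" "F {1,7} = 0"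
    and "F {5,6} = F {2,3}" "F {5,7} = F {2,4}" "F {3,5} = F {2,6}" "F {4,5} = F {2,7}"
      "F {6,7} = F {3,4}" "F {4,6} = F {3,7}"
    and "F {2,5} + F {3,6} + F {4,7} = 0"
proof -
  have sd: "F K = hodge 1 (wedge (wedge eta omega) F) K" for K using assms by simp
  note eval = hodge_def wedge_eta_omega_eq wedge_add_left wedge_basic_form_left literal_index_simps
  show "F {1,2} = 0" using sd[of "{1,2}"] by (simp add: eval del: One_nat_def)
  show "F {1,3} = 0" using sd[of "{1,3}"] by (simp add: eval del: One_nat_def)
  show "F {1,4} = 0" using sd[of "{1,4}"] by (simp add: eval del: One_nat_def)
  show "F {1,5} = 0" using sd[of "{1,5}"] by (simp add: eval del: One_nat_def)
  show "F {1,6} = 0" using sd[of "{1,6}"] by (simp add: eval del: One_nat_def)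
  show "F {1,7} = 0" using sd[of "{1,7}"] by (simp add: eval del: One_nat_def)
  show "F {5,6} = F {2,3}" using sd[of "{2,3}"] by (simp add: eval del: One_nat_def)
  show "F {5,7} = F {2,4}" using sd[of "{2,4}"] by (simp add: eval del: One_nat_def)
  show "F {3,5} = F {2,6}" using sd[of "{2,6}"] by (simp add: eval del: One_nat_def)
  show "F {4,5} = F {2,7}" using sd[of "{2,7}"] by (simp add: eval del: One_nat_def)
  show "F {6,7} = F {3,4}" using sd[of "{3,4}"] by (simp add: eval del: One_nat_def)
  show "F {4,6} = F {3,7}" using sd[of "{3,7}"] by (simp add: eval del: One_nat_def)
  show "F {2,5} + F {3,6} + F {4,7} = 0" using sd[of "{2,5}"] by (simp add: eval del: One_nat_def)
qed

lemma wedge_basic_form_two_form_eq_zero: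
  assumes "is_two_form F" and "card T = 3" and "card L \<noteq> 5"
  shows "wedge (basic_form T) F L = 0"
proof (cases "L \<subseteq> idx \<and> T \<subseteq> L")
  case True
  then have "finite L" by (blast intro: finite_subset_idx)
  with True assms(2) have "card (L - T) = card L - 3" and "card L \<ge> 3"
    by (auto simp: card_Diff_subset finite_subset dest: card_mono)
  then have "card (L - T) \<noteq> 2" using assms(3) by linarith
  then have "F (L - T) = 0" using assms(1) by (auto simp: is_two_form_def)
  then show ?thesis by (simp add: wedge_basic_form_left)
qed (auto simp: wedge_basic_form_left)

lemma wedge_eq_zero_on_complements_of_pairs:
  assumes "\<And>L. L \<subseteq> idx \<Longrightarrow> card L \<noteq> 5 \<Longrightarrow> wedge \<alpha> F L = 0"
    and "\<And>x y. x \<in> idx \<Longrightarrow> y \<in> idx \<Longrightarrow> x < y \<Longrightarrow> wedge \<alpha> F (idx - {x, y}) = 0"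
  shows "wedge \<alpha> F = (\<lambda>_. 0)"
proof
  fix L
  show "wedge \<alpha> F L = 0"
  proof (cases "L \<subseteq> idx \<and> card L = 5")
    case True
    have "card (idx - L) = 2"
      using True by (simp add: card_Diff_subset finite_subset_idx idx_def)
    then obtain x y where "idx - L = {x, y}" "x \<in> idx" "y \<in> idx" "x < y"
      by (rule idx_pair_cases[rotated]) auto
    moreover have "L = idx - (idx - L)" using True by auto
    ultimately show ?thesis using assms(2) by metis
  qed (use assms(1) in \<open>auto simp: wedge_def\<close>)
qed

lemma wedge_Omega_eq_zero_if_self_dual_contact:
  assumes two_form: "is_two_form F" and self_dual: "hodge 1 (wedge (wedge eta omega) F) = F"
  shows "wedge re_Omega F = (\<lambda>_. 0)" and "wedge im_Omega F = (\<lambda>_. 0)"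
proof -
  note coeffs = self_dual_contact_instanton_coeffs[OF self_dual]
  note degree = wedge_basic_form_two_form_eq_zero[OF two_form]
  note eval = wedge_add_left wedge_diff_left wedge_basic_form_left literal_index_simps coeffs
  have in_idx: "x \<in> {1,2,3,4,5,6,7::nat} \<and> y \<in> {1,2,3,4,5,6,7::nat}"
    if "x \<in> idx" "y \<in> idx" for x y
    using that by (simp add: idx_eq)
  show "wedge re_Omega F = (\<lambda>_. 0)"
  proof (rule wedge_eq_zero_on_complements_of_pairs)
    show "wedge re_Omega F L = 0" if "card L \<noteq> 5" for L
      using that by (simp add: re_Omega_def wedge_add_left wedge_diff_left degree)
    show "wedge re_Omega F (idx - {x, y}) = 0" if "x \<in> idx" "y \<in> idx" "x < y" for x y
      using in_idx[OF that(1,2)] that(3) unfolding insert_iff empty_iff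
      by (elim conjE disjE) (simp_all add: re_Omega_def eval algebra_simps del: One_nat_def)
  qed
  show "wedge im_Omega F = (\<lambda>_. 0)"
  proof (rule wedge_eq_zero_on_complements_of_pairs)
    show "wedge im_Omega F L = 0" if "card L \<noteq> 5" for L
      using that by (simp add: im_Omega_def wedge_add_left wedge_diff_left degree)
    show "wedge im_Omega F (idx - {x, y}) = 0" if "x \<in> idx" "y \<in> idx" "x < y" for x y
      using in_idx[OF that(1,2)] that(3) unfolding insert_iff empty_iff
      by (elim conjE disjE) (simp_all add: im_Omega_def eval algebra_simps del: One_nat_def)
  qed
qed

lemma wedge_sasaki_g2_form:
  "wedge (sasaki_g2_form c p q) F =
    (\<lambda>K. c *\<^sub>R wedge (wedge eta omega) F K + p *\<^sub>R wedge re_Omega F K + q *\<^sub>R wedge im_Omega F K)"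
  by (simp add: sasaki_g2_form_def wedge_add_left wedge_scale_left)

lemma hodge_scale: "hodge s (\<lambda>K. r *\<^sub>R G K) = (\<lambda>K. r *\<^sub>R hodge s G K)"
  by (simp add: hodge_def fun_eq_iff)

theorem lemma3p1:
  fixes y2 a b z :: real and F :: "nat set \<Rightarrow> 'v::real_vector"
  assumes "y2 > 0"
    and "z > 0" and "z^2 = 4 * (a^2 + b^2) powr (4/3)"
    and "induces_metric_g (phi_X y2 a b a b z)"
    and "is_two_form F"
    and "hodge (phi_orientation (phi_X y2 a b a b z)) (wedge (wedge eta omega) F) = F"
  shows "hodge (phi_orientation (phi_X y2 a b a b z)) (wedge (phi_X y2 a b a b z) F) = - F"
proof -
  define c where "c = - z / (2 * y2^2)"
  obtain p q where phi_X: "phi_X y2 a b a b z = sasaki_g2_form c p q"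
    using phi_X_eq_sasaki_g2_form[OF assms(1)] unfolding c_def by blast
  have "c < 0" using assms(1,2) by (simp add: c_def)
  then have orientation: "phi_orientation (sasaki_g2_form c p q) = 1" and "c = -1"
    using induces_metric_g_sasaki_g2_form assms(4) unfolding phi_X by blast+
  have self_dual: "hodge 1 (wedge (wedge eta omega) F) = F"
    using assms(6) unfolding phi_X orientation .
  have "wedge (sasaki_g2_form c p q) F = (\<lambda>K. c *\<^sub>R wedge (wedge eta omega) F K)"
    using wedge_Omega_eq_zero_if_self_dual_contact[OF assms(5) self_dual]
    by (simp add: wedge_sasaki_g2_form)
  then have "hodge 1 (wedge (sasaki_g2_form c p q) F) = (\<lambda>K. c *\<^sub>R F K)"
    using self_dual by (simp add: hodge_scale)
  then show ?thesis
    unfolding phi_X orientation using \<open>c = -1\<close> by (simp add: fun_eq_iff)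
qed

end
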